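(* Fix integers $z_1>z_2\ge0$ and $k\ge1$. For every $m\ge0$, the number of $(z_1,z_2,k)$-asymmetric partitions of $m$ equals the number of partitions of $m$ of the form \[\lambda^{\{a_1,\dots,a_r\}}=\Big(z_1(r-1)+r,\underbrace{2r-1,\dots,2r-1}_{a_r},\underbrace{2r-3,\dots,2r-3}_{a_{r-1}-a_r},\dots,\underbrace{2k-1,\dots,2k-1}_{a_k-a_{k+1}},\underbrace{2k-2,\dots,2k-2}_{a_{k-1}-a_k},\dots,\underbrace{2,\dots,2}_{a_1-a_2},\underbrace{1,\dots,1}_{z_2}\Big)\] for some integer $r\ge k$ and integers $a_1>a_2>\dots>a_r\ge0$.
   Context: The Frobenius rank of a partition $\mu$ is $r=\max\{j:\mu_j\ge j\}$ and its Frobenius coordinates are $(\alpha\mid\beta)$ with $\alpha_i=\mu_i-i$, $\beta_i=\mu'_i-i$ ($1\le i\le r$, $\mu'$ the conjugate). For $1\le k\le r$, $\mu$ is $(z_1,z_2,k)$-asymmetric if $\mu=(\alpha_1,\dots,\alpha_r\mid\alpha_1+z_1,\dots,\widehat{\alpha_k+z_1},\dots,\alpha_r+z_1,z_2)$ for some strict partition $\alpha$, where the hat denotes omission (so the column coordinates are the decreasing arrangement of $\{\alpha_j+z_1:j\ne k\}\cup\{z_2\}$). *)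

theory Defs
  imports Main
begin

definition is_partition :: "nat list \<Rightarrow> bool" where
  "is_partition \<mu> \<longleftrightarrow> sorted_wrt (\<ge>) \<mu> \<and> 0 \<notin> set \<mu>"

definition part :: "nat list \<Rightarrow> nat \<Rightarrow> nat" where
  "part \<mu> j = (if 1 \<le> j \<and> j \<le> length \<mu> then \<mu> ! (j - 1) else 0)"

definition conj_part :: "nat list \<Rightarrow> nat \<Rightarrow> nat" where
  "conj_part \<mu> i = length (filter (\<lambda>x. i \<le> x) \<mu>)"

definition frob_rank :: "nat list \<Rightarrow> nat" where
  "frob_rank \<mu> = Max ({0} \<union> {j \<in> {1..length \<mu>}. j \<le> part \<mu> j})"

definition frob_alpha :: "nat list \<Rightarrow> nat list" where
  "frob_alpha \<mu> = map (\<lambda>i. part \<mu> i - i) [1..<frob_rank \<mu> + 1]"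

definition frob_beta :: "nat list \<Rightarrow> nat list" where
  "frob_beta \<mu> = map (\<lambda>i. conj_part \<mu> i - i) [1..<frob_rank \<mu> + 1]"

definition asymmetric :: "nat \<Rightarrow> nat \<Rightarrow> nat \<Rightarrow> nat list \<Rightarrow> bool" where
  "asymmetric z1 z2 k \<mu> \<longleftrightarrow>
     (let r = frob_rank \<mu>; \<alpha> = frob_alpha \<mu> in
        1 \<le> k \<and> k \<le> r \<and> sorted_wrt (>) \<alpha> \<and>
        frob_beta \<mu> = rev (sorted_list_of_set
            ({\<alpha> ! (j - 1) + z1 | j. j \<in> {1..r} \<and> j \<noteq> k} \<union> {z2})))"

definition lam :: "nat \<Rightarrow> nat \<Rightarrow> nat \<Rightarrow> nat list \<Rightarrow> nat list" where
  "lam z1 z2 k a =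
     (let r = length a; A = (\<lambda>i. if 1 \<le> i \<and> i \<le> r then a ! (i - 1) else 0) in
       [z1 * (r - 1) + r]
       @ concat (map (\<lambda>i. replicate (A i - A (i + 1)) (if k \<le> i then 2 * i - 1 else 2 * i))
                     (rev [1..<r + 1]))
       @ replicate z2 1)"

end

theory Submission
  imports Defs
begin

(* Frobenius coordinates identify a partition of rank r >= 1 with a pair (alpha, beta) of strict
   partitions with r parts each, and |mu| = |alpha| + |beta| + r.  For a (z1,z2,k)-asymmetric
   partition, beta is determined by alpha, which can be any strict partition with r >= k parts;
   hence |mu| = 2|alpha| - alpha_k + (r - 1) z1 + z2 + r.  Summation by parts shows that
   lambda^alpha has the same size, and alpha is recovered from lambda^alpha, in which the part
   2i - 1 or 2i occurs exactly alpha_i - alpha_(i+1) times.  So both families of partitions of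
   m are in bijection with the strict partitions alpha with at least k parts and
   |lambda^alpha| = m. *)

lemma nat_eqI_pos_le_iff:
  fixes m n :: nat
  assumes "\<And>i. 1 \<le> i \<Longrightarrow> i \<le> m \<longleftrightarrow> i \<le> n"
  shows "m = n"
  using assms[of m] assms[of n] by (cases "m = 0"; cases "n = 0") auto

lemma downward_closed_eq_lessThan_card:
  fixes S :: "nat set"
  assumes fin: "finite S" and dc: "\<And>a b. a \<le> b \<Longrightarrow> b \<in> S \<Longrightarrow> a \<in> S"
  shows "S = {..<card S}"
proof (intro set_eqI iffI)
  fix t assume "t \<in> S"
  then have "{..t} \<subseteq> S" using dc by auto
  from card_mono[OF fin this] show "t \<in> {..<card S}" by simp
next
  fix t assume t: "t \<in> {..<card S}"
  show "t \<in> S"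
  proof (rule ccontr)
    assume "t \<notin> S"
    then have "S \<subseteq> {..<t}" using dc by (meson lessThan_iff not_le subsetI)
    from card_mono[OF _ this] t show False by simp
  qed
qed

lemma downward_closed_eq_atLeastAtMost_card:
  fixes S :: "nat set"
  assumes fin: "finite S" and "0 \<notin> S" and dc: "\<And>a b. 1 \<le> a \<Longrightarrow> a \<le> b \<Longrightarrow> b \<in> S \<Longrightarrow> a \<in> S"
  shows "S = {1..card S}"
proof -
  let ?T = "Suc -` S"
  have S: "S = Suc ` ?T"
    using \<open>0 \<notin> S\<close> by (auto simp: image_iff) (metis not0_implies_Suc)
  have "?T = {..<card ?T}"
    by (rule downward_closed_eq_lessThan_card) (use fin dc in \<open>auto simp: finite_vimageI\<close>)
  moreover have "card S = card ?T"
    using S card_image[of Suc ?T] by simp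
  ultimately show ?thesis
    using S image_Suc_lessThan by metis
qed

lemma sum_card_filter_swap:
  assumes "finite I" "finite J"
  shows "(\<Sum>i\<in>I. card {j \<in> J. P i j}) = (\<Sum>j\<in>J. card {i \<in> I. P i j})"
  using assms sum.swap[of "\<lambda>i j. if P i j then 1 else 0 :: nat" J I]
  by (simp add: sum.If_cases Int_def)

lemma summation_by_parts_atLeastAtMost:
  fixes A c :: "nat \<Rightarrow> 'a::comm_ring"
  shows "(\<Sum>i = 1..n. (A i - A (Suc i)) * c i)
       = (\<Sum>i = 1..n. A i * (c i - c (i - 1))) + A 1 * c 0 - A (Suc n) * c n"
  by (induction n) (simp_all add: algebra_simps)

lemma sum_list_concat: "sum_list (concat xss) = sum_list (map sum_list xss)"
  by (induction xss) simp_all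

lemma count_list_replicate: "count_list (replicate n x) y = (if x = y then n else 0)"
  by (induction n) auto

lemma sum_list_sorted_list_of_set: "sum_list (sorted_list_of_set A) = \<Sum>A"
proof (cases "finite A")
  case True
  then show ?thesis using sum_list_distinct_conv_sum_set[of "sorted_list_of_set A" "\<lambda>x. x"] by simp
qed simp

lemma sorted_wrt_ge_replicate: "sorted_wrt (\<ge>) (replicate n (x :: 'a::preorder))"
  by (induction n) auto

lemma sorted_wrt_concat_replicate:
  fixes c :: "'a \<Rightarrow> 'b::linorder"
  assumes "sorted_wrt (\<lambda>i j. c j \<le> c i) xs"
  shows "sorted_wrt (\<ge>) (concat (map (\<lambda>i. replicate (n i) (c i)) xs))"
  using assms by (induction xs) (auto simp: sorted_wrt_append sorted_wrt_ge_replicate)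

lemma sorted_wrt_greater_imp_ge: "sorted_wrt (>) xs \<Longrightarrow> sorted_wrt (\<ge>) (xs :: 'a::order list)"
  by (rule sorted_wrt_mono_rel[of _ "(>)"]) auto

lemma sum_list_eq_sum_part: "sum_list \<mu> = (\<Sum>i = 1..length \<mu>. part \<mu> i)"
proof -
  have "sum_list \<mu> = (\<Sum>i<length \<mu>. \<mu> ! i)"
    by (simp add: sum_list_sum_nth atLeast0LessThan)
  also have "\<dots> = (\<Sum>i = 1..length \<mu>. \<mu> ! (i - 1))"
    using sum_bounds_lt_plus1[of "\<lambda>i. \<mu> ! (i - 1)"] by simp
  also have "\<dots> = (\<Sum>i = 1..length \<mu>. part \<mu> i)"
    by (rule sum.cong) (auto simp: part_def)
  finally show ?thesis .
qed

lemma part_antimono: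
  assumes s: "sorted_wrt (\<ge>) \<mu>" and "1 \<le> i" "i \<le> j"
  shows "part \<mu> j \<le> part \<mu> i"
proof (cases "j \<le> length \<mu> \<and> i \<noteq> j")
  case True
  then have "i - 1 < j - 1" "j - 1 < length \<mu>" using assms by linarith+
  then have "\<mu> ! (j - 1) \<le> \<mu> ! (i - 1)" by (rule sorted_wrt_nth_less[OF s])
  then show ?thesis using True assms by (simp add: part_def)
qed (auto simp: part_def)

lemma part_add_index_antimono:
  assumes s: "sorted_wrt (>) xs" and "1 \<le> i" "i \<le> j" "j \<le> length xs"
  shows "part xs j + j \<le> part xs i + i"
  using assms(3,4)
proof (induction j rule: dec_induct)
  case (step j)
  have "xs ! j < xs ! (j - 1)"
    using sorted_wrt_nth_less[OF s, of "j - 1" j] step \<open>1 \<le> i\<close> by simp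
  then have "part xs (Suc j) < part xs j"
    using step \<open>1 \<le> i\<close> by (simp add: part_def)
  then show ?case using step by simp
qed simp

lemma part_equalityI:
  assumes "length xs = length ys" and "\<And>i. 1 \<le> i \<Longrightarrow> i \<le> length xs \<Longrightarrow> part xs i = part ys i"
  shows "xs = ys"
proof (rule nth_equalityI)
  fix t assume "t < length xs"
  then show "xs ! t = ys ! t" using assms(1) assms(2)[of "Suc t"] by (simp add: part_def)
qed (rule assms(1))

lemma part_eq_sum_diff:
  assumes s: "sorted_wrt (\<ge>) a" and i: "1 \<le> i"
  shows "part a i = (\<Sum>j = i..length a. part a j - part a (Suc j))"
proof (cases "i \<le> length a")
  case True
  have "int (\<Sum>j = i..length a. part a j - part a (Suc j))
      = (\<Sum>j = i..length a. - int (part a (Suc j)) - - int (part a j))"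
    unfolding of_nat_sum using i part_antimono[OF s] by (intro sum.cong) (simp_all add: of_nat_diff)
  also have "\<dots> = int (part a i)"
    using True by (subst sum_Suc_diff) (auto simp: part_def)
  finally show ?thesis by (simp only: of_nat_eq_iff eq_commute)
qed (simp add: part_def)

section \<open>Frobenius coordinates\<close>

lemma le_conj_part_iff:
  assumes s: "sorted_wrt (\<ge>) \<mu>" and i: "1 \<le> i" and j: "1 \<le> j"
  shows "i \<le> conj_part \<mu> j \<longleftrightarrow> j \<le> part \<mu> i"
proof -
  let ?S = "{t. t < length \<mu> \<and> j \<le> \<mu> ! t}"
  have S: "?S = {..<card ?S}"
  proof (rule downward_closed_eq_lessThan_card)
    fix a b assume ab: "a \<le> b" "b \<in> ?S"
    have "\<mu> ! b \<le> \<mu> ! a" if "a < b"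
      using sorted_wrt_nth_less[OF s that] ab by simp
    then show "a \<in> ?S" using ab by (cases "a = b") auto
  qed simp
  have "conj_part \<mu> j = card ?S"
    by (simp add: conj_part_def length_filter_conv_card)
  then have "i \<le> conj_part \<mu> j \<longleftrightarrow> i - 1 \<in> ?S"
    using i by (subst S) auto
  also have "\<dots> \<longleftrightarrow> j \<le> part \<mu> i"
    using i j by (auto simp: part_def)
  finally show ?thesis .
qed

lemma conj_part_one: "is_partition \<mu> \<Longrightarrow> conj_part \<mu> 1 = length \<mu>"
  unfolding is_partition_def conj_part_def
  by (metis filter_True less_one not_less)

lemma le_frob_rank_iff:
  assumes s: "sorted_wrt (\<ge>) \<mu>" and j: "1 \<le> j"
  shows "j \<le> frob_rank \<mu> \<longleftrightarrow> j \<le> part \<mu> j"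
proof -
  let ?P = "{j \<in> {1..length \<mu>}. j \<le> part \<mu> j}"
  have P: "?P = {1..card ?P}"
  proof (rule downward_closed_eq_atLeastAtMost_card)
    fix a b assume "1 \<le> a" "a \<le> b" "b \<in> ?P"
    moreover from this have "part \<mu> b \<le> part \<mu> a" by (intro part_antimono[OF s]) auto
    ultimately show "a \<in> ?P" by auto
  qed simp_all
  have Max_eq: "Max ({0} \<union> {1..n}) = n" for n :: nat
    by (cases "n = 0") (auto intro: Max_eqI)
  have "frob_rank \<mu> = card ?P"
    unfolding frob_rank_def by (subst P) (rule Max_eq)
  then have "j \<le> frob_rank \<mu> \<longleftrightarrow> j \<in> ?P"
    using j by (subst P) simp
  also have "\<dots> \<longleftrightarrow> j \<le> part \<mu> j"
    using j by (auto simp: part_def)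
  finally show ?thesis .
qed

lemma frob_rank_le_length: "sorted_wrt (\<ge>) \<mu> \<Longrightarrow> frob_rank \<mu> \<le> length \<mu>"
  using le_frob_rank_iff[of \<mu> "frob_rank \<mu>"]
  by (cases "frob_rank \<mu> = 0") (auto simp: part_def split: if_splits)

lemma frob_rank_eqI:
  assumes "sorted_wrt (\<ge>) \<mu>" and "\<And>j. 1 \<le> j \<Longrightarrow> j \<le> part \<mu> j \<longleftrightarrow> j \<le> r"
  shows "frob_rank \<mu> = r"
  by (rule nat_eqI_pos_le_iff) (simp add: assms le_frob_rank_iff)

lemma length_frob_alpha [simp]: "length (frob_alpha \<mu>) = frob_rank \<mu>"
  by (simp add: frob_alpha_def)

lemma length_frob_beta [simp]: "length (frob_beta \<mu>) = frob_rank \<mu>"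
  by (simp add: frob_beta_def)

lemma part_frob_alpha: "1 \<le> i \<Longrightarrow> i \<le> frob_rank \<mu> \<Longrightarrow> part (frob_alpha \<mu>) i = part \<mu> i - i"
  unfolding part_def frob_alpha_def by (subst nth_map) (auto simp del: upt_Suc)

lemma part_frob_beta: "1 \<le> i \<Longrightarrow> i \<le> frob_rank \<mu> \<Longrightarrow> part (frob_beta \<mu>) i = conj_part \<mu> i - i"
  unfolding part_def frob_beta_def by (subst nth_map) (auto simp del: upt_Suc)

(* Rows beyond the rank are read off from the columns: for i > r, row i meets exactly the
   columns j <= r whose length beta_j + j is at least i; the first column has beta_1 + 1 boxes. *)
definition of_frob_part :: "nat list \<Rightarrow> nat list \<Rightarrow> nat \<Rightarrow> nat" where
  "of_frob_part \<alpha> \<beta> i = (if i \<le> length \<alpha> then part \<alpha> i + i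
                           else card {j \<in> {1..length \<alpha>}. i \<le> part \<beta> j + j})"

definition of_frob :: "nat list \<Rightarrow> nat list \<Rightarrow> nat list" where
  "of_frob \<alpha> \<beta> = map (of_frob_part \<alpha> \<beta>) [1..<part \<beta> 1 + 2]"

lemma length_of_frob [simp]: "length (of_frob \<alpha> \<beta>) = part \<beta> 1 + 1"
  by (simp add: of_frob_def)

lemma part_of_frob:
  "part (of_frob \<alpha> \<beta>) i = (if 1 \<le> i \<and> i \<le> part \<beta> 1 + 1 then of_frob_part \<alpha> \<beta> i else 0)"
  by (auto simp: part_def of_frob_def simp del: upt_Suc)

lemma of_frob_frob_alpha_frob_beta:
  assumes p: "is_partition \<mu>" and r: "1 \<le> frob_rank \<mu>"
  shows "of_frob (frob_alpha \<mu>) (frob_beta \<mu>) = \<mu>"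
proof -
  have s: "sorted_wrt (\<ge>) \<mu>" using p by (simp add: is_partition_def)
  let ?r = "frob_rank \<mu>" and ?\<alpha> = "frob_alpha \<mu>" and ?\<beta> = "frob_beta \<mu>"
  have diag: "j \<le> part \<mu> j" "j \<le> conj_part \<mu> j" if "1 \<le> j" "j \<le> ?r" for j
    using that le_frob_rank_iff[OF s] le_conj_part_iff[OF s] by auto
  have len: "part ?\<beta> 1 + 1 = length \<mu>"
    using part_frob_beta[of 1 \<mu>] conj_part_one[OF p] r frob_rank_le_length[OF s] diag(2)[of 1] by simp
  show ?thesis
  proof (rule part_equalityI)
    show "length (of_frob ?\<alpha> ?\<beta>) = length \<mu>" using len by simp
    fix i assume i: "1 \<le> i" "i \<le> length (of_frob ?\<alpha> ?\<beta>)"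
    show "part (of_frob ?\<alpha> ?\<beta>) i = part \<mu> i"
    proof (cases "i \<le> ?r")
      case True
      then show ?thesis
        using i len diag(1)[of i] by (simp add: part_of_frob of_frob_part_def part_frob_alpha)
    next
      case False
      have "part \<mu> i \<le> part \<mu> (Suc ?r)"
        using False by (intro part_antimono[OF s]) auto
      also have "\<dots> \<le> ?r"
        using le_frob_rank_iff[OF s, of "Suc ?r"] by simp
      finally have small: "part \<mu> i \<le> ?r" .
      have "{j \<in> {1..?r}. i \<le> part ?\<beta> j + j} = {j \<in> {1..?r}. i \<le> conj_part \<mu> j}"
        using diag(2) by (auto simp: part_frob_beta)
      also have "\<dots> = {j \<in> {1..?r}. j \<le> part \<mu> i}"
        using le_conj_part_iff[OF s \<open>1 \<le> i\<close>] by auto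
      also have "\<dots> = {1..part \<mu> i}"
        using small by auto
      finally show ?thesis
        using False i len by (simp add: part_of_frob of_frob_part_def)
    qed
  qed
qed

locale frob_coords =
  fixes \<alpha> \<beta> :: "nat list" and r :: nat
  assumes sorted_\<alpha>: "sorted_wrt (>) \<alpha>" and sorted_\<beta>: "sorted_wrt (>) \<beta>"
    and length_\<alpha>: "length \<alpha> = r" and length_\<beta>: "length \<beta> = r" and rank_pos: "1 \<le> r"
begin

abbreviation col :: "nat \<Rightarrow> nat" where
  "col j \<equiv> part \<beta> j + j"

lemma col_antimono: "1 \<le> i \<Longrightarrow> i \<le> j \<Longrightarrow> j \<le> r \<Longrightarrow> col j \<le> col i"
  using part_add_index_antimono[OF sorted_\<beta>] length_\<beta> by simp

lemma col_bounds: "1 \<le> j \<Longrightarrow> j \<le> r \<Longrightarrow> r \<le> col j \<and> col j \<le> part \<beta> 1 + 1"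
  using col_antimono[of j r] col_antimono[of 1 j] by simp

lemma of_frob_part_low: "i \<le> r \<Longrightarrow> of_frob_part \<alpha> \<beta> i = part \<alpha> i + i"
  by (simp add: of_frob_part_def length_\<alpha>)

lemma le_of_frob_part_high_iff:
  assumes "r < i" "1 \<le> j"
  shows "j \<le> of_frob_part \<alpha> \<beta> i \<longleftrightarrow> j \<le> r \<and> i \<le> col j"
proof -
  let ?S = "{j \<in> {1..r}. i \<le> col j}"
  have "?S = {1..card ?S}"
    by (rule downward_closed_eq_atLeastAtMost_card) (use col_antimono in fastforce)+
  moreover have "of_frob_part \<alpha> \<beta> i = card ?S"
    using assms by (simp add: of_frob_part_def length_\<alpha>)
  ultimately show ?thesis
    using assms by (metis (no_types, lifting) atLeastAtMost_iff mem_Collect_eq)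
qed

lemma of_frob_part_high_le: "r < i \<Longrightarrow> of_frob_part \<alpha> \<beta> i \<le> r"
  using le_of_frob_part_high_iff[of i "of_frob_part \<alpha> \<beta> i"] rank_pos
  by (cases "of_frob_part \<alpha> \<beta> i = 0") auto

lemma of_frob_part_antimono:
  assumes "1 \<le> i" "i \<le> i'"
  shows "of_frob_part \<alpha> \<beta> i' \<le> of_frob_part \<alpha> \<beta> i"
proof (cases "i' \<le> r")
  case True
  then show ?thesis
    using part_add_index_antimono[OF sorted_\<alpha> assms] length_\<alpha> assms by (simp add: of_frob_part_low)
next
  case False
  show ?thesis
  proof (cases "i \<le> r")
    case True
    have "r \<le> part \<alpha> r + r" by simp
    also have "\<dots> \<le> part \<alpha> i + i"
      using part_add_index_antimono[OF sorted_\<alpha> assms(1) True] length_\<alpha> by simp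
    finally show ?thesis
      using of_frob_part_high_le[of i'] False True by (simp add: of_frob_part_low)
  next
    case i_high: False
    have "j \<le> of_frob_part \<alpha> \<beta> i" if "1 \<le> j" "j \<le> of_frob_part \<alpha> \<beta> i'" for j
      using that le_of_frob_part_high_iff[of i' j] le_of_frob_part_high_iff[of i j] assms False i_high
      by simp
    then show ?thesis
      by (cases "of_frob_part \<alpha> \<beta> i' = 0") auto
  qed
qed

lemma of_frob_part_pos: "1 \<le> i \<Longrightarrow> i \<le> part \<beta> 1 + 1 \<Longrightarrow> 1 \<le> of_frob_part \<alpha> \<beta> i"
  using le_of_frob_part_high_iff[of i 1] rank_pos by (cases "i \<le> r") (auto simp: of_frob_part_low)

lemma is_partition_of_frob: "is_partition (of_frob \<alpha> \<beta>)"
proof -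
  have "sorted_wrt (\<ge>) (of_frob \<alpha> \<beta>)"
    unfolding of_frob_def sorted_wrt_map
    by (rule sorted_wrt_mono_rel[where P = "(<)"])
      (auto intro: of_frob_part_antimono simp: sorted_wrt_upt simp del: upt_Suc)
  moreover have "0 \<notin> set (of_frob \<alpha> \<beta>)"
    using of_frob_part_pos by (fastforce simp: of_frob_def)
  ultimately show ?thesis by (simp add: is_partition_def)
qed

lemma sorted_of_frob: "sorted_wrt (\<ge>) (of_frob \<alpha> \<beta>)"
  using is_partition_of_frob by (simp add: is_partition_def)

lemma frob_rank_of_frob: "frob_rank (of_frob \<alpha> \<beta>) = r"
proof (rule frob_rank_eqI[OF sorted_of_frob])
  fix j :: nat assume "1 \<le> j"
  then show "j \<le> part (of_frob \<alpha> \<beta>) j \<longleftrightarrow> j \<le> r"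
    using col_bounds[of r] of_frob_part_high_le[of j] rank_pos
    by (cases "j \<le> r") (auto simp: part_of_frob of_frob_part_low)
qed

lemma frob_alpha_of_frob: "frob_alpha (of_frob \<alpha> \<beta>) = \<alpha>"
  by (rule part_equalityI)
    (use col_bounds[of r] rank_pos in
      \<open>auto simp: frob_rank_of_frob length_\<alpha> part_frob_alpha part_of_frob of_frob_part_low\<close>)

lemma conj_part_of_frob:
  assumes j: "1 \<le> j" "j \<le> r"
  shows "conj_part (of_frob \<alpha> \<beta>) j = col j"
proof (rule nat_eqI_pos_le_iff)
  fix i :: nat assume i: "1 \<le> i"
  have "i \<le> conj_part (of_frob \<alpha> \<beta>) j \<longleftrightarrow> j \<le> part (of_frob \<alpha> \<beta>) i"
    by (rule le_conj_part_iff[OF sorted_of_frob i j(1)])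
  also have "\<dots> \<longleftrightarrow> i \<le> col j"
  proof (cases "i \<le> r")
    case True
    have "r \<le> part \<alpha> r + r" by simp
    also have "\<dots> \<le> part \<alpha> i + i"
      using part_add_index_antimono[OF sorted_\<alpha> i True] length_\<alpha> by simp
    finally show ?thesis
      using True i j col_bounds[of j] col_bounds[of r] by (simp add: part_of_frob of_frob_part_low)
  next
    case False
    then show ?thesis
      using le_of_frob_part_high_iff[of i j] j col_bounds[of j] by (auto simp: part_of_frob)
  qed
  finally show "i \<le> conj_part (of_frob \<alpha> \<beta>) j \<longleftrightarrow> i \<le> col j" .
qed

lemma frob_beta_of_frob: "frob_beta (of_frob \<alpha> \<beta>) = \<beta>"
  by (rule part_equalityI)
    (auto simp: frob_rank_of_frob length_\<beta> part_frob_beta conj_part_of_frob)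

lemma sum_list_of_frob: "sum_list (of_frob \<alpha> \<beta>) = sum_list \<alpha> + sum_list \<beta> + r"
proof -
  let ?L = "part \<beta> 1 + 1"
  have "r \<le> ?L" using col_bounds[of r] rank_pos by simp
  have "sum_list (of_frob \<alpha> \<beta>) = (\<Sum>i = 1..?L. of_frob_part \<alpha> \<beta> i)"
    unfolding sum_list_eq_sum_part[of "of_frob \<alpha> \<beta>"] by (intro sum.cong) (auto simp: part_of_frob)
  also have "{1..?L} = {1..r} \<union> {r<..?L}" using \<open>r \<le> ?L\<close> by auto
  also have "(\<Sum>i\<in>{1..r} \<union> {r<..?L}. of_frob_part \<alpha> \<beta> i)
      = (\<Sum>i = 1..r. of_frob_part \<alpha> \<beta> i) + (\<Sum>i\<in>{r<..?L}. of_frob_part \<alpha> \<beta> i)"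
    by (rule sum.union_disjoint) auto
  also have "(\<Sum>i = 1..r. of_frob_part \<alpha> \<beta> i) = (\<Sum>i = 1..r. part \<alpha> i + i)"
    by (rule sum.cong) (simp_all add: of_frob_part_low)
  also have "(\<Sum>i\<in>{r<..?L}. of_frob_part \<alpha> \<beta> i)
      = (\<Sum>i\<in>{r<..?L}. card {j \<in> {1..r}. i \<le> col j})"
    by (rule sum.cong) (auto simp: of_frob_part_def length_\<alpha>)
  also have "\<dots> = (\<Sum>j = 1..r. card {i \<in> {r<..?L}. i \<le> col j})"
    by (rule sum_card_filter_swap) auto
  also have "\<dots> = (\<Sum>j = 1..r. col j - r)"
  proof (rule sum.cong)
    fix j assume "j \<in> {1..r}"
    then have "{i \<in> {r<..?L}. i \<le> col j} = {r<..col j}" using col_bounds[of j] by auto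
    then show "card {i \<in> {r<..?L}. i \<le> col j} = col j - r" by simp
  qed simp
  finally have "sum_list (of_frob \<alpha> \<beta>) + r * r
      = (\<Sum>i = 1..r. part \<alpha> i + i) + (\<Sum>j = 1..r. col j - r + r)"
    by (simp add: sum.distrib)
  also have "(\<Sum>j = 1..r. col j - r + r) = (\<Sum>j = 1..r. part \<beta> j + j)"
    using col_bounds by (intro sum.cong) auto
  finally show ?thesis
    using double_gauss_sum_from_Suc_0[of r, where 'a = nat]
    by (simp add: sum.distrib sum_list_eq_sum_part[of \<alpha>] sum_list_eq_sum_part[of \<beta>] length_\<alpha> length_\<beta>)
qed

end

section \<open>The partitions lambda\<close>

definition block_value :: "nat \<Rightarrow> nat \<Rightarrow> nat" where
  "block_value k i = (if k \<le> i then 2 * i - 1 else 2 * i)"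

definition lam_blocks :: "nat \<Rightarrow> nat list \<Rightarrow> nat list" where
  "lam_blocks k a = concat (map (\<lambda>i. replicate (part a i - part a (Suc i)) (block_value k i))
                               (rev [1..<length a + 1]))"

lemma lam_eq: "lam z1 z2 k a = [z1 * (length a - 1) + length a] @ lam_blocks k a @ replicate z2 1"
  by (simp add: lam_def lam_blocks_def block_value_def part_def Let_def)

lemma strict_mono_block_value: "strict_mono (block_value k)"
  by (auto simp: strict_mono_Suc_iff block_value_def)

lemma set_lam_blocks: "set (lam_blocks k a) \<subseteq> block_value k ` {1..length a}"
  by (auto simp: lam_blocks_def set_upt)

lemma sum_list_lam_blocks_eq_sum:
  "sum_list (lam_blocks k a) = (\<Sum>i = 1..length a. (part a i - part a (Suc i)) * block_value k i)"
proof -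
  have "sum_list (lam_blocks k a)
      = sum_list (map (\<lambda>i. (part a i - part a (Suc i)) * block_value k i) [1..<length a + 1])"
    by (simp add: lam_blocks_def sum_list_concat sum_list_replicate o_def rev_map[symmetric])
  then show ?thesis
    by (simp add: interv_sum_list_conv_sum_set_nat atLeastLessThanSuc_atLeastAtMost del: upt_Suc)
qed

lemma count_list_lam_blocks:
  assumes "1 \<le> i" "i \<le> length a"
  shows "count_list (lam_blocks k a) (block_value k i) = part a i - part a (Suc i)"
proof -
  have inj: "block_value k j = block_value k i \<longleftrightarrow> j = i" for j
    using strict_mono_block_value by (metis strict_mono_eq)
  have "count_list (lam_blocks k a) (block_value k i)
      = sum_list (map (\<lambda>j. if j = i then part a j - part a (Suc j) else 0) (rev [1..<length a + 1]))"
    unfolding lam_blocks_def count_list_concat map_map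
    by (intro arg_cong[where f = sum_list] map_cong) (simp_all add: count_list_replicate inj)
  also have "\<dots> = (\<Sum>j = 1..length a. if j = i then part a j - part a (Suc j) else 0)"
    by (simp add: rev_map[symmetric] interv_sum_list_conv_sum_set_nat atLeastLessThanSuc_atLeastAtMost
        del: upt_Suc)
  also have "\<dots> = part a i - part a (Suc i)"
    using assms by simp
  finally show ?thesis .
qed

lemma sum_list_lam_blocks:
  assumes s: "sorted_wrt (\<ge>) a" and k: "1 \<le> k" "k \<le> length a"
  shows "sum_list (lam_blocks k a) + part a k = 2 * sum_list a"
proof -
  let ?A = "\<lambda>i. int (part a i)" and ?c = "\<lambda>i. int (block_value k i)"
  have "int (sum_list (lam_blocks k a)) = (\<Sum>i = 1..length a. (?A i - ?A (Suc i)) * ?c i)"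
    unfolding sum_list_lam_blocks_eq_sum of_nat_sum
    using part_antimono[OF s] by (intro sum.cong) (simp_all add: of_nat_diff)
  also have "\<dots> = (\<Sum>i = 1..length a. ?A i * (?c i - ?c (i - 1)))"
    using summation_by_parts_atLeastAtMost[of ?A ?c "length a"]
    by (simp add: part_def[of a "Suc (length a)"] block_value_def[of k 0])
  also have "\<dots> = (\<Sum>i = 1..length a. 2 * ?A i - (if i = k then ?A i else 0))"
    using k by (intro sum.cong) (auto simp: block_value_def)
  also have "\<dots> = 2 * int (sum_list a) - ?A k"
    using k by (simp add: sum_subtractf sum_distrib_left sum_list_eq_sum_part[of a])
  finally show ?thesis by simp
qed

lemma sum_list_lam:
  assumes "sorted_wrt (\<ge>) a" "1 \<le> k" "k \<le> length a"
  shows "sum_list (lam z1 z2 k a) + part a k = z1 * (length a - 1) + length a + 2 * sum_list a + z2"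
  using sum_list_lam_blocks[OF assms] by (simp add: lam_eq sum_list_replicate)

lemma is_partition_lam:
  assumes z1: "1 \<le> z1" and k: "1 \<le> k" "k \<le> length a"
  shows "is_partition (lam z1 z2 k a)"
proof -
  let ?r = "length a"
  have sorted_blocks: "sorted_wrt (\<ge>) (lam_blocks k a)"
    unfolding lam_blocks_def
    by (rule sorted_wrt_concat_replicate)
      (use strict_mono_block_value in \<open>auto simp: sorted_wrt_rev sorted_wrt_upt strict_mono_less_eq
         intro: sorted_wrt_mono_rel[where P = "(<)"] simp del: upt_Suc\<close>)
  have "x \<in> {1..z1 * (?r - 1) + ?r}" if x_in: "x \<in> set (lam_blocks k a)" for x
  proof -
    obtain i where i: "1 \<le> i" "i \<le> ?r" and x: "x = block_value k i"
      using x_in set_lam_blocks by fastforce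
    have "block_value k 0 < x" "x \<le> block_value k ?r"
      using i x strict_mono_block_value by (auto simp: strict_mono_less strict_mono_less_eq)
    then have "1 \<le> x" "x \<le> 2 * ?r - 1"
      using k by (simp_all add: block_value_def)
    moreover have "?r - 1 \<le> z1 * (?r - 1)"
      using mult_le_mono1[of 1 z1 "?r - 1"] z1 by simp
    ultimately show ?thesis unfolding atLeastAtMost_iff by linarith
  qed
  then show ?thesis
    unfolding is_partition_def lam_eq using sorted_blocks k
    by (auto simp: sorted_wrt_append sorted_wrt_ge_replicate)
qed

lemma lam_inj:
  assumes a: "sorted_wrt (\<ge>) a" and b: "sorted_wrt (\<ge>) b"
    and eq: "lam z1 z2 k a = lam z1 z2 k b"
  shows "a = b"
proof (rule part_equalityI)
  have "strict_mono (\<lambda>r. z1 * (r - 1) + r)"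
    by (simp add: strict_mono_Suc_iff less_Suc_eq_le mult_le_mono2)
  moreover have "z1 * (length a - 1) + length a = z1 * (length b - 1) + length b"
    using eq by (simp add: lam_eq)
  ultimately show len: "length a = length b"
    by (metis (mono_tags) strict_mono_eq)
  have blocks: "lam_blocks k a = lam_blocks k b"
    using eq by (simp add: lam_eq)
  fix i assume "1 \<le> i" "i \<le> length a"
  have "(\<Sum>j = i..length a. part a j - part a (Suc j)) = (\<Sum>j = i..length b. part b j - part b (Suc j))"
    using count_list_lam_blocks[of _ a k] count_list_lam_blocks[of _ b k] blocks len \<open>1 \<le> i\<close>
    by (intro sum.cong) auto
  then show "part a i = part b i"
    using part_eq_sum_diff[OF a \<open>1 \<le> i\<close>] part_eq_sum_diff[OF b \<open>1 \<le> i\<close>] by simp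
qed

section \<open>Asymmetric partitions\<close>

definition asym_beta :: "nat \<Rightarrow> nat \<Rightarrow> nat \<Rightarrow> nat list \<Rightarrow> nat list" where
  "asym_beta z1 z2 k \<alpha> =
     rev (sorted_list_of_set ({\<alpha> ! (j - 1) + z1 | j. j \<in> {1..length \<alpha>} \<and> j \<noteq> k} \<union> {z2}))"

lemma asymmetric_iff:
  "asymmetric z1 z2 k \<mu> \<longleftrightarrow> 1 \<le> k \<and> k \<le> frob_rank \<mu> \<and> sorted_wrt (>) (frob_alpha \<mu>)
     \<and> frob_beta \<mu> = asym_beta z1 z2 k (frob_alpha \<mu>)"
  by (simp add: asymmetric_def asym_beta_def Let_def)

lemma sorted_asym_beta: "sorted_wrt (>) (asym_beta z1 z2 k \<alpha>)"
  unfolding asym_beta_def sorted_wrt_rev by (rule strict_sorted_list_of_set)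

lemma
  assumes z: "z2 < z1" and s: "sorted_wrt (>) \<alpha>" and k: "1 \<le> k" "k \<le> length \<alpha>"
  shows length_asym_beta: "length (asym_beta z1 z2 k \<alpha>) = length \<alpha>"
    and sum_list_asym_beta:
      "sum_list (asym_beta z1 z2 k \<alpha>) + part \<alpha> k = sum_list \<alpha> + (length \<alpha> - 1) * z1 + z2"
proof -
  let ?r = "length \<alpha>" and ?g = "\<lambda>j. \<alpha> ! (j - 1) + z1" and ?J = "{1..length \<alpha>} - {k}"
  let ?S = "?g ` ?J \<union> {z2}"
  have S: "asym_beta z1 z2 k \<alpha> = rev (sorted_list_of_set ?S)"
    unfolding asym_beta_def by (rule arg_cong[where f = "\<lambda>S. rev (sorted_list_of_set S)"]) auto
  have "distinct \<alpha>" using s by (induction \<alpha>) auto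
  then have inj: "inj_on ?g ?J"
    by (intro inj_onI) (auto simp: nth_eq_iff_index_eq)
  moreover have z2: "z2 \<notin> ?g ` ?J" using z by auto
  ultimately show "length (asym_beta z1 z2 k \<alpha>) = ?r"
    unfolding S using k by (simp add: card_image)
  have "sum_list (asym_beta z1 z2 k \<alpha>) = (\<Sum>j\<in>?J. \<alpha> ! (j - 1)) + (?r - 1) * z1 + z2"
    unfolding S sum_list_rev sum_list_sorted_list_of_set
    using inj z2 k by (simp add: sum.reindex sum.distrib)
  moreover have "sum_list \<alpha> = part \<alpha> k + (\<Sum>j\<in>?J. part \<alpha> j)"
    unfolding sum_list_eq_sum_part[of \<alpha>] using k by (intro sum.remove) auto
  moreover have "(\<Sum>j\<in>?J. part \<alpha> j) = (\<Sum>j\<in>?J. \<alpha> ! (j - 1))"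
    by (intro sum.cong) (auto simp: part_def)
  ultimately show "sum_list (asym_beta z1 z2 k \<alpha>) + part \<alpha> k = sum_list \<alpha> + (?r - 1) * z1 + z2"
    by simp
qed

lemma frob_coords_asym_beta:
  assumes "z2 < z1" "sorted_wrt (>) \<alpha>" "1 \<le> k" "k \<le> length \<alpha>"
  shows "frob_coords \<alpha> (asym_beta z1 z2 k \<alpha>) (length \<alpha>)"
  using length_asym_beta[OF assms] sorted_asym_beta assms by unfold_locales auto

lemma asymmetric_partition_iff:
  assumes z: "z2 < z1"
  shows "is_partition \<mu> \<and> asymmetric z1 z2 k \<mu> \<longleftrightarrow>
    (\<exists>\<alpha>. sorted_wrt (>) \<alpha> \<and> 1 \<le> k \<and> k \<le> length \<alpha> \<and> \<mu> = of_frob \<alpha> (asym_beta z1 z2 k \<alpha>))"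
proof
  assume "is_partition \<mu> \<and> asymmetric z1 z2 k \<mu>"
  then show "\<exists>\<alpha>. sorted_wrt (>) \<alpha> \<and> 1 \<le> k \<and> k \<le> length \<alpha> \<and> \<mu> = of_frob \<alpha> (asym_beta z1 z2 k \<alpha>)"
    using of_frob_frob_alpha_frob_beta[of \<mu>] by (auto simp: asymmetric_iff)
next
  assume "\<exists>\<alpha>. sorted_wrt (>) \<alpha> \<and> 1 \<le> k \<and> k \<le> length \<alpha> \<and> \<mu> = of_frob \<alpha> (asym_beta z1 z2 k \<alpha>)"
  then obtain \<alpha> where \<alpha>: "sorted_wrt (>) \<alpha>" "1 \<le> k" "k \<le> length \<alpha>"
    and \<mu>: "\<mu> = of_frob \<alpha> (asym_beta z1 z2 k \<alpha>)" by blast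
  interpret frob_coords \<alpha> "asym_beta z1 z2 k \<alpha>" "length \<alpha>"
    by (rule frob_coords_asym_beta[OF z \<alpha>])
  show "is_partition \<mu> \<and> asymmetric z1 z2 k \<mu>"
    unfolding \<mu> asymmetric_iff
    using is_partition_of_frob frob_rank_of_frob frob_alpha_of_frob frob_beta_of_frob \<alpha> by simp
qed

lemma sum_list_of_frob_asym_beta:
  assumes "z2 < z1" "sorted_wrt (>) \<alpha>" "1 \<le> k" "k \<le> length \<alpha>"
  shows "sum_list (of_frob \<alpha> (asym_beta z1 z2 k \<alpha>)) = sum_list (lam z1 z2 k \<alpha>)"
proof -
  interpret frob_coords \<alpha> "asym_beta z1 z2 k \<alpha>" "length \<alpha>"
    by (rule frob_coords_asym_beta[OF assms])
  show ?thesis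
    using sum_list_of_frob sum_list_asym_beta[OF assms]
      sum_list_lam[OF sorted_wrt_greater_imp_ge[OF assms(2)] assms(3,4), of z1 z2] assms(2)
    by (simp add: mult.commute)
qed

theorem proposition6p1:
  fixes z1 z2 k m :: nat
  assumes "z2 < z1" and "1 \<le> k"
  shows "card {\<mu>. is_partition \<mu> \<and> sum_list \<mu> = m \<and> asymmetric z1 z2 k \<mu>}
       = card {\<mu>. is_partition \<mu> \<and> sum_list \<mu> = m \<and>
                  (\<exists>a. k \<le> length a \<and> sorted_wrt (>) a \<and> \<mu> = lam z1 z2 k a)}"
proof -
  define S where "S = {\<alpha>. sorted_wrt (>) \<alpha> \<and> k \<le> length \<alpha> \<and> sum_list (lam z1 z2 k \<alpha>) = m}"
  let ?F = "\<lambda>\<alpha>. of_frob \<alpha> (asym_beta z1 z2 k \<alpha>)"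
  have "{\<mu>. is_partition \<mu> \<and> sum_list \<mu> = m \<and> asymmetric z1 z2 k \<mu>}
      = {\<mu>. (is_partition \<mu> \<and> asymmetric z1 z2 k \<mu>) \<and> sum_list \<mu> = m}"
    by auto
  also have "\<dots> = {?F \<alpha> | \<alpha>. sorted_wrt (>) \<alpha> \<and> k \<le> length \<alpha> \<and> sum_list (?F \<alpha>) = m}"
    unfolding asymmetric_partition_iff[OF assms(1)] using assms(2) by auto
  also have "\<dots> = ?F ` S"
    using sum_list_of_frob_asym_beta[OF assms(1) _ assms(2)] unfolding S_def by auto
  finally have "{\<mu>. is_partition \<mu> \<and> sum_list \<mu> = m \<and> asymmetric z1 z2 k \<mu>} = ?F ` S" .
  moreover have "{\<mu>. is_partition \<mu> \<and> sum_list \<mu> = m \<and>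
                  (\<exists>a. k \<le> length a \<and> sorted_wrt (>) a \<and> \<mu> = lam z1 z2 k a)} = lam z1 z2 k ` S"
    using is_partition_lam[of z1 k] assms unfolding S_def by auto
  moreover have "inj_on ?F S"
    by (rule inj_on_inverseI[where g = frob_alpha])
      (use frob_coords.frob_alpha_of_frob[OF frob_coords_asym_beta[OF assms(1) _ assms(2)]] S_def in auto)
  moreover have "inj_on (lam z1 z2 k) S"
    by (rule inj_onI) (auto simp: S_def intro: lam_inj sorted_wrt_greater_imp_ge)
  ultimately show ?thesis
    by (simp add: card_image)
qed

end
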